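(* Let $c\ge 0$, $R>0$, $R\neq c$, and let $\mathcal{C}:x^2+y^2=R^2$. Let $\mathcal{D}$ be the ellipse $\frac{x^2}{(R^2+c^2)^2/(4R^2)}+\frac{y^2}{(R^2-c^2)^2/(4R^2)}=1$, which is centered at the origin with foci $(\pm c,0)$. Suppose some nondegenerate triangle inscribed in $\mathcal{C}$ is circumscribed about $\mathcal{D}$, and let $\mathcal{P}$ be the family of all such triangles. Then for every $\triangle ABC\in\mathcal{P}$, the three vertices of the tangential triangle of $\triangle ABC$ lie on the fixed ellipse $$\frac{x^2}{\frac{4R^6}{(R^2+c^2)^2}}+\frac{y^2}{\frac{4R^6}{(R^2-c^2)^2}}=1,$$ which is centered at the center of $\mathcal{D}$.
   Context: A triangle is circumscribed about a conic if each of its three sidelines is tangent to the conic. The tangential triangle of a non-right triangle $ABC$ is the triangle formed by the tangent lines to the circumcircle of $\triangle ABC$ at $A$, $B$, $C$. *)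

theory Defs
  imports "HOL-Analysis.Analysis"
begin

definition on_circle :: "real \<Rightarrow> real \<times> real \<Rightarrow> bool" where
  "on_circle R P \<longleftrightarrow> (fst P)^2 + (snd P)^2 = R^2"

definition on_ellipse :: "real \<Rightarrow> real \<Rightarrow> real \<times> real \<Rightarrow> bool" where
  "on_ellipse a2 b2 P \<longleftrightarrow> (fst P)^2 / a2 + (snd P)^2 / b2 = 1"

text \<open>The line through the distinct points P, Q is tangent to the ellipse:
  it passes through a point T of the ellipse and its direction is orthogonal
  to the gradient of the ellipse equation at T.\<close>
definition line_tangent_ellipse :: "real \<Rightarrow> real \<Rightarrow> real \<times> real \<Rightarrow> real \<times> real \<Rightarrow> bool" where
  "line_tangent_ellipse a2 b2 P Q \<longleftrightarrow> P \<noteq> Q \<and>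
     (\<exists>T. on_ellipse a2 b2 T \<and> collinear {P, Q, T} \<and>
          fst T * (fst Q - fst P) / a2 + snd T * (snd Q - snd P) / b2 = 0)"

definition circumscribed_about_ellipse ::
  "real \<Rightarrow> real \<Rightarrow> real \<times> real \<Rightarrow> real \<times> real \<Rightarrow> real \<times> real \<Rightarrow> bool" where
  "circumscribed_about_ellipse a2 b2 A B C \<longleftrightarrow>
     line_tangent_ellipse a2 b2 A B \<and> line_tangent_ellipse a2 b2 B C \<and>
     line_tangent_ellipse a2 b2 C A"

definition inscribed_triangle :: "real \<Rightarrow> real \<times> real \<Rightarrow> real \<times> real \<Rightarrow> real \<times> real \<Rightarrow> bool" where
  "inscribed_triangle R A B C \<longleftrightarrow>
     \<not> collinear {A, B, C} \<and> on_circle R A \<and> on_circle R B \<and> on_circle R C"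

definition on_circle_tangent :: "real \<times> real \<Rightarrow> real \<times> real \<Rightarrow> bool" where
  "on_circle_tangent A X \<longleftrightarrow> (fst X - fst A) * fst A + (snd X - snd A) * snd A = 0"

definition tangential_vertex :: "real \<times> real \<Rightarrow> real \<times> real \<Rightarrow> real \<times> real \<Rightarrow> bool" where
  "tangential_vertex B C X \<longleftrightarrow> on_circle_tangent B X \<and> on_circle_tangent C X"

end

theory Submission
  imports Defs
begin

text \<open>The vertex of the tangential triangle opposite to \<open>A\<close> is the pole of the sideline \<open>BC\<close>
  with respect to the circle \<open>x\<^sup>2 + y\<^sup>2 = R\<^sup>2\<close>, and polarity in that circle maps the tangent
  lines of the ellipse \<open>x\<^sup>2/a2 + y\<^sup>2/b2 = 1\<close> to the points of the dual ellipse
  \<open>a2 x\<^sup>2 + b2 y\<^sup>2 = R\<^sup>4\<close>. With the given \<open>a2\<close> and \<open>b2\<close> this dual ellipse is the one claimed.\<close>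

lemma inner_real_pair: "x \<bullet> y = fst x * fst y + snd x * snd y" for x y :: "real \<times> real"
  by (simp add: inner_prod_def)

definition ellipse_normal :: "real \<Rightarrow> real \<Rightarrow> real \<times> real \<Rightarrow> real \<times> real" where
  "ellipse_normal a2 b2 T = (fst T / a2, snd T / b2)"

lemma on_ellipse_iff_normal: "on_ellipse a2 b2 T \<longleftrightarrow> ellipse_normal a2 b2 T \<bullet> T = 1"
  by (simp add: on_ellipse_def ellipse_normal_def inner_real_pair power2_eq_square)

lemma line_tangent_ellipse_iff_normal:
  "line_tangent_ellipse a2 b2 P Q \<longleftrightarrow> P \<noteq> Q \<and>
     (\<exists>T. ellipse_normal a2 b2 T \<bullet> T = 1 \<and> collinear {P, Q, T} \<and>
          ellipse_normal a2 b2 T \<bullet> (Q - P) = 0)"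
  by (simp add: line_tangent_ellipse_def on_ellipse_iff_normal ellipse_normal_def inner_real_pair)

lemma on_circle_tangent_iff_inner:
  assumes "on_circle R A"
  shows "on_circle_tangent A X \<longleftrightarrow> X \<bullet> A = R\<^sup>2"
  using assms
  by (auto simp: on_circle_tangent_def on_circle_def inner_real_pair power2_eq_square algebra_simps)

lemma inner_eq_on_line:
  fixes B C T X :: "'a::real_inner"
  assumes "B \<noteq> C" and "collinear {B, C, T}" and "X \<bullet> B = r" and "X \<bullet> C = r"
  shows "X \<bullet> T = r"
proof -
  have "collinear {B, T, C}"
    using assms(2) by (simp add: insert_commute)
  then obtain u where "T = u *\<^sub>R B + (1 - u) *\<^sub>R C"
    using assms(1) collinear_3_expand by blast
  then have "X \<bullet> T = u * (X \<bullet> B) + (1 - u) * (X \<bullet> C)"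
    by (simp add: inner_add_right)
  then show ?thesis
    using assms(3,4) by (simp add: algebra_simps)
qed

lemma orthogonal_same_vector_parallel:
  fixes u v d :: "real \<times> real"
  assumes "d \<noteq> 0" and "v \<noteq> 0" and "u \<bullet> d = 0" and "v \<bullet> d = 0"
  obtains k where "u = k *\<^sub>R v"
proof -
  obtain u1 u2 v1 v2 d1 d2 where uvd: "u = (u1, u2)" "v = (v1, v2)" "d = (d1, d2)"
    by (cases u, cases v, cases d)
  have ud: "u1 * d1 + u2 * d2 = 0" and vd: "v1 * d1 + v2 * d2 = 0"
    using assms(3,4) uvd by (simp_all add: inner_real_pair)
  have "(u1 * v2 - u2 * v1) * d1 = v2 * (u1 * d1 + u2 * d2) - u2 * (v1 * d1 + v2 * d2)"
    and "(u1 * v2 - u2 * v1) * d2 = u1 * (v1 * d1 + v2 * d2) - v1 * (u1 * d1 + u2 * d2)"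
    by (simp_all add: algebra_simps)
  then have "(u1 * v2 - u2 * v1) * d1 = 0" and "(u1 * v2 - u2 * v1) * d2 = 0"
    by (simp_all add: ud vd)
  then have cross: "u1 * v2 = u2 * v1"
    using assms(1) uvd by (auto simp: zero_prod_def)
  show ?thesis
  proof (cases "v1 = 0")
    case True
    then have "v2 \<noteq> 0"
      using assms(2) uvd by (auto simp: zero_prod_def)
    then show ?thesis
      using that[of "u2 / v2"] cross True uvd by (auto simp: field_simps)
  next
    case False
    then show ?thesis
      using that[of "u1 / v1"] cross uvd by (auto simp: field_simps)
  qed
qed

lemma tangential_vertex_on_dual_ellipse:
  assumes "a2 > 0" and "b2 > 0" and "R \<noteq> 0"
    and "on_circle R B" and "on_circle R C"
    and "line_tangent_ellipse a2 b2 B C" and "tangential_vertex B C X"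
  shows "on_ellipse (R^4 / a2) (R^4 / b2) X"
proof -
  obtain T where "B \<noteq> C" and "collinear {B, C, T}"
    and normal_T: "ellipse_normal a2 b2 T \<bullet> T = 1"
    and normal_BC: "ellipse_normal a2 b2 T \<bullet> (C - B) = 0"
    using assms(6) unfolding line_tangent_ellipse_iff_normal by blast
  have "X \<bullet> B = R\<^sup>2" and "X \<bullet> C = R\<^sup>2"
    using assms(4,5,7) by (simp_all add: tangential_vertex_def on_circle_tangent_iff_inner)
  then have XT: "X \<bullet> T = R\<^sup>2" and XBC: "X \<bullet> (C - B) = 0"
    using \<open>B \<noteq> C\<close> \<open>collinear {B, C, T}\<close> inner_eq_on_line by (auto simp: inner_diff_right)
  have "X \<noteq> 0"
    using XT assms(3) by auto
  then obtain k where "ellipse_normal a2 b2 T = k *\<^sub>R X"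
    using orthogonal_same_vector_parallel \<open>B \<noteq> C\<close> normal_BC XBC by (metis right_minus_eq)
  then have "fst T / a2 = k * fst X" and "snd T / b2 = k * snd X"
    by (simp_all add: ellipse_normal_def prod_eq_iff)
  then have T: "T = (k * a2 * fst X, k * b2 * snd X)"
    using assms(1,2) by (simp add: prod_eq_iff field_simps)
  define S where "S = a2 * (fst X)\<^sup>2 + b2 * (snd X)\<^sup>2"
  have "k\<^sup>2 * S = 1"
    using normal_T assms(1,2) unfolding T S_def
    by (simp add: ellipse_normal_def inner_real_pair power2_eq_square algebra_simps)
  then have "S = (k * S)\<^sup>2"
    by (simp add: power2_eq_square algebra_simps)
  also have "k * S = R\<^sup>2"
    using XT unfolding T S_def by (simp add: inner_real_pair power2_eq_square algebra_simps)
  finally have "S = R^4"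
    by simp
  then show ?thesis
    using assms(1-3) unfolding on_ellipse_def S_def by (simp add: field_simps)
qed

theorem theorem5p10:
  fixes c R :: real
  assumes "c \<ge> 0" and "R > 0" and "R \<noteq> c"
    and "\<exists>A0 B0 C0. inscribed_triangle R A0 B0 C0 \<and>
           circumscribed_about_ellipse ((R^2 + c^2)^2 / (4 * R^2)) ((R^2 - c^2)^2 / (4 * R^2)) A0 B0 C0"
  shows "\<forall>A B C. inscribed_triangle R A B C \<and>
           circumscribed_about_ellipse ((R^2 + c^2)^2 / (4 * R^2)) ((R^2 - c^2)^2 / (4 * R^2)) A B C
         \<longrightarrow> (\<forall>X. (tangential_vertex B C X \<or> tangential_vertex C A X \<or> tangential_vertex A B X)
                 \<longrightarrow> on_ellipse (4 * R^6 / (R^2 + c^2)^2) (4 * R^6 / (R^2 - c^2)^2) X)"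
proof (intro allI impI)
  fix A B C X
  define a2 where "a2 = (R\<^sup>2 + c\<^sup>2)\<^sup>2 / (4 * R\<^sup>2)"
  define b2 where "b2 = (R\<^sup>2 - c\<^sup>2)\<^sup>2 / (4 * R\<^sup>2)"
  assume "inscribed_triangle R A B C \<and> circumscribed_about_ellipse a2 b2 A B C"
    and "tangential_vertex B C X \<or> tangential_vertex C A X \<or> tangential_vertex A B X"
  moreover have "a2 > 0"
    using assms(2) by (simp add: a2_def add_pos_nonneg)
  moreover have "b2 > 0"
    using assms by (simp add: b2_def power2_eq_iff_nonneg)
  moreover have "R \<noteq> 0"
    using assms(2) by simp
  ultimately have "on_ellipse (R^4 / a2) (R^4 / b2) X"
    using tangential_vertex_on_dual_ellipse
    unfolding inscribed_triangle_def circumscribed_about_ellipse_def by metis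
  moreover have "R^4 / a2 = 4 * R^6 / (R\<^sup>2 + c\<^sup>2)\<^sup>2" and "R^4 / b2 = 4 * R^6 / (R\<^sup>2 - c\<^sup>2)\<^sup>2"
    using assms(2) by (simp_all add: a2_def b2_def field_simps eval_nat_numeral)
  ultimately show "on_ellipse (4 * R^6 / (R\<^sup>2 + c\<^sup>2)\<^sup>2) (4 * R^6 / (R\<^sup>2 - c\<^sup>2)\<^sup>2) X"
    by simp
qed

end
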